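(* Let $F$ be an ordered forest with priority forest $P$ and priority traversal $\tau$. Then $\tau^{-1}$ is the Jordan–Hölder permutation of a unique maximal chain of $I_P=[\hat0,P]$.
   Context: $[n]=\{1,\dots,n\}$, $[n]_0=\{0,\dots,n\}$. An ordered $(m,n)$-forest is a rooted forest with $n+1$ nodes and $m$ edges whose component trees $T_0,\dots,T_{n-m}$ are totally ordered, with unlabeled roots marked $\circ,\circ_1,\dots,\circ_{n-m}$, and non-root vertices labeled bijectively by $[m]$. Priority search: initially only the children of $\circ$ are unblocked; at each step visit the unblocked unvisited node with the smallest label and unblock its children; when a tree is exhausted, move to the next tree, visit its root and unblock its children. Steps are numbered $1,\dots,n$ (the visit of $\circ$ is not counted). The priority traversal $\tau$ is the partial permutation $[n]\to[m]$ sending step $i$ to the label of the node visited at step $i$, undefined when that node is a root; $\tau^{-1}:[m]\to[n]$ is its inverse. The priority forest $P$ is obtained by relabeling each node by its visiting step, with $\circ$ labeled $0$. A priority forest on $[n]_0$ is a rooted forest with vertex set $[n]_0$ whose component trees are increasing (each non-root vertex has a larger label than its parent) and such that for $j<k$ every label of the $j$-th tree is smaller than every label of the $k$-th tree. $\Pi(n)$ is the poset of priority forests on $[n]_0$ ordered by inclusion of edge sets, with an extra top element; $\hat0$ is the edgeless forest. For priority forests $Q\lessdot Q'$ (one edge added), $\lambda(Q,Q')$ is the larger endpoint of the edge in $E(Q')\setminus E(Q)$. A maximal chain $\hat0=P_0\lessdot\cdots\lessdot P_m=P$ has Jordan–Hölder permutation $[m]\to[n]$, $i\mapsto\lambda(P_{i-1},P_i)$.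 *)

theory Defs
  imports Main
begin

text \<open>Nodes of an ordered (m,n)-forest: Inl j is the root of the j-th tree T_j
  (Inl 0 is the root marked circ, Inl j the root marked circ_j), and Inr a is the
  non-root vertex labelled a, for a in [m].\<close>

definition parent_rel :: "nat \<Rightarrow> (nat \<Rightarrow> nat + nat) \<Rightarrow> ((nat + nat) \<times> (nat + nat)) set" where
  "parent_rel m par = {(Inr a, par a) | a. a \<in> {1..m}}"

definition ordered_forest :: "nat \<Rightarrow> nat \<Rightarrow> (nat \<Rightarrow> nat + nat) \<Rightarrow> bool" where
  "ordered_forest m n par \<longleftrightarrow>
     m \<le> n \<and>
     (\<forall>a\<in>{1..m}. case par a of Inl j \<Rightarrow> j \<le> n - m | Inr b \<Rightarrow> b \<in> {1..m}) \<and>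
     (\<forall>a\<in>{1..m}. \<exists>j. (Inr a, Inl j) \<in> (parent_rel m par)\<^sup>+)"

definition avail :: "nat \<Rightarrow> (nat \<Rightarrow> nat + nat) \<Rightarrow> (nat + nat) list \<Rightarrow> nat set" where
  "avail m par vs = {a \<in> {1..m}. par a \<in> set vs \<and> Inr a \<notin> set vs}"

text \<open>Next visited node: the unblocked unvisited node with the smallest label, or,
  if the current tree is exhausted, the root of the next tree.\<close>
definition next_visit :: "nat \<Rightarrow> (nat \<Rightarrow> nat + nat) \<Rightarrow> (nat + nat) list \<Rightarrow> nat + nat" where
  "next_visit m par vs =
     (if avail m par vs \<noteq> {} then Inr (Min (avail m par vs))
      else Inl (length (filter isl vs)))"

fun psearch :: "nat \<Rightarrow> (nat \<Rightarrow> nat + nat) \<Rightarrow> nat \<Rightarrow> (nat + nat) list" where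
  "psearch m par 0 = [Inl 0]"
| "psearch m par (Suc k) = psearch m par k @ [next_visit m par (psearch m par k)]"

definition visit :: "nat \<Rightarrow> nat \<Rightarrow> (nat \<Rightarrow> nat + nat) \<Rightarrow> nat \<Rightarrow> nat + nat" where
  "visit m n par i = psearch m par n ! i"

definition step_of :: "nat \<Rightarrow> nat \<Rightarrow> (nat \<Rightarrow> nat + nat) \<Rightarrow> nat + nat \<Rightarrow> nat" where
  "step_of m n par x = (THE i. i \<le> n \<and> visit m n par i = x)"

definition ptrav :: "nat \<Rightarrow> nat \<Rightarrow> (nat \<Rightarrow> nat + nat) \<Rightarrow> nat \<Rightarrow> nat option" where
  "ptrav m n par i = (case visit m n par i of Inr a \<Rightarrow> Some a | Inl _ \<Rightarrow> None)"

definition ptrav_inv :: "nat \<Rightarrow> nat \<Rightarrow> (nat \<Rightarrow> nat + nat) \<Rightarrow> nat \<Rightarrow> nat" where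
  "ptrav_inv m n par a = (THE i. i \<in> {1..n} \<and> ptrav m n par i = Some a)"

definition pforest_of :: "nat \<Rightarrow> nat \<Rightarrow> (nat \<Rightarrow> nat + nat) \<Rightarrow> (nat \<times> nat) set" where
  "pforest_of m n par = {(step_of m n par (par a), step_of m n par (Inr a)) | a. a \<in> {1..m}}"

definition connected_in :: "(nat \<times> nat) set \<Rightarrow> nat \<Rightarrow> nat \<Rightarrow> bool" where
  "connected_in E u v \<longleftrightarrow> (u, v) \<in> (E \<union> E\<inverse>)\<^sup>*"

text \<open>A priority forest on [n]_0, given by its set of edges (parent, child):
  a rooted forest on [n]_0 (every vertex has at most one parent) whose trees are
  increasing, and whose trees can be totally ordered so that all labels of an
  earlier tree are smaller than all labels of a later tree.\<close>
definition priority_forest :: "nat \<Rightarrow> (nat \<times> nat) set \<Rightarrow> bool" where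
  "priority_forest n E \<longleftrightarrow>
     E \<subseteq> {0..n} \<times> {0..n} \<and>
     (\<forall>(p, c) \<in> E. p < c) \<and>
     (\<forall>p p' c. (p, c) \<in> E \<and> (p', c) \<in> E \<longrightarrow> p = p') \<and>
     (\<forall>u\<in>{0..n}. \<forall>v\<in>{0..n}. \<not> connected_in E u v \<longrightarrow>
        (\<forall>x y. connected_in E u x \<and> connected_in E v y \<longrightarrow> x < y) \<or>
        (\<forall>x y. connected_in E u x \<and> connected_in E v y \<longrightarrow> y < x))"

definition pcover :: "nat \<Rightarrow> (nat \<times> nat) set \<Rightarrow> (nat \<times> nat) set \<Rightarrow> bool" where
  "pcover n Q Q' \<longleftrightarrow> priority_forest n Q \<and> priority_forest n Q' \<and>
     Q \<subseteq> Q' \<and> card (Q' - Q) = 1"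

definition plabel :: "(nat \<times> nat) set \<Rightarrow> (nat \<times> nat) set \<Rightarrow> nat" where
  "plabel Q Q' = (let e = (THE e. e \<in> Q' - Q) in max (fst e) (snd e))"

definition max_chain :: "nat \<Rightarrow> (nat \<times> nat) set \<Rightarrow> (nat \<Rightarrow> (nat \<times> nat) set) \<Rightarrow> bool" where
  "max_chain n P ch \<longleftrightarrow> ch 0 = {} \<and> ch (card P) = P \<and>
     (\<forall>i\<in>{1..card P}. pcover n (ch (i - 1)) (ch i))"

definition jh_perm :: "(nat \<Rightarrow> (nat \<times> nat) set) \<Rightarrow> nat \<Rightarrow> nat" where
  "jh_perm ch i = plabel (ch (i - 1)) (ch i)"

end

theory Submission
  imports Defs
begin

(* For a label a, the edge of P from the parent of a to a joins their visiting steps, and its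
   larger end is tau^-1(a).  Adding these edges in the order a = 1, ..., m therefore gives a chain
   with Jordan-Hoelder permutation tau^-1, as soon as every prefix is a priority forest.  It is:
   while a waits to be visited it is unblocked, so every node visited in the meantime has a smaller
   label and its edge, already in the prefix, leads back to an earlier step; hence each edge spans
   an interval within its own component, and components are intervals.  Uniqueness: a maximal
   chain below P labels each cover by the larger end of the added edge, and these larger ends are
   pairwise distinct, so the labels determine the edge added at each step. *)

section \<open>Increasing edge sets whose components are intervals\<close>

lemma connected_in_refl [simp]: "connected_in E u u"
  by (simp add: connected_in_def)

lemma connected_in_sym: "connected_in E u v \<Longrightarrow> connected_in E v u"
  unfolding connected_in_def
  by (metis converse_Un converse_converse rtrancl_converseI sup_commute)

lemma connected_in_trans:
  "connected_in E u v \<Longrightarrow> connected_in E v w \<Longrightarrow> connected_in E u w"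
  unfolding connected_in_def by (rule rtrancl_trans)

lemma connected_in_edge: "(p, c) \<in> E \<Longrightarrow> connected_in E p c"
  unfolding connected_in_def by blast

definition increasing_edges :: "(nat \<times> nat) set \<Rightarrow> bool" where
  "increasing_edges E \<longleftrightarrow> (\<forall>(p, c) \<in> E. p < c)"

definition spans_connected :: "(nat \<times> nat) set \<Rightarrow> bool" where
  "spans_connected E \<longleftrightarrow> (\<forall>(p, c) \<in> E. \<forall>w. p < w \<and> w < c \<longrightarrow> connected_in E p w)"

lemma connected_in_between:
  assumes "increasing_edges E" "spans_connected E" "connected_in E x z"
    and "min x z \<le> w" "w \<le> max x z"
  shows "connected_in E x w"
  using assms(3-5) unfolding connected_in_def[of E x z]
proof (induction z arbitrary: w rule: rtrancl_induct)
  case (step z z')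
  have xz: "connected_in E x z" and xz': "connected_in E x z'"
    using step.hyps by (auto simp: connected_in_def intro: rtrancl_into_rtrancl)
  have "min x z \<le> w \<and> w \<le> max x z \<or> w = z' \<or> min z z' < w \<and> w < max z z'"
    using step.prems by (auto simp: min_def max_def split: if_splits)
  moreover have "(z, z') \<in> E \<or> (z', z) \<in> E"
    using step.hyps(2) by blast
  ultimately consider "min x z \<le> w \<and> w \<le> max x z" | "w = z'"
    | "min z z' < w \<and> w < max z z' \<and> ((z, z') \<in> E \<or> (z', z) \<in> E)"
    by blast
  then show ?case
  proof cases
    case 3
    have "connected_in E z w \<or> connected_in E z' w"
    proof (cases "(z, z') \<in> E")
      case True
      with 3 assms(1) have "z < w \<and> w < z'" by (auto simp: increasing_edges_def)
      with True assms(2) show ?thesis by (auto simp: spans_connected_def)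
    next
      case False
      with 3 assms(1) have "(z', z) \<in> E" "z' < w \<and> w < z" by (auto simp: increasing_edges_def)
      with assms(2) show ?thesis by (auto simp: spans_connected_def)
    qed
    then show ?thesis
      using xz xz' connected_in_sym connected_in_trans by blast
  qed (use step.IH xz' in auto)
qed simp

lemma separated_components:
  assumes "increasing_edges E" "spans_connected E"
    and "\<not> connected_in E u v" "u < v" "connected_in E u x" "connected_in E v y"
  shows "x < y"
proof (rule ccontr)
  assume "\<not> x < y"
  then have "connected_in E u v \<or> connected_in E y x"
    using connected_in_between[OF assms(1,2,5), of v] assms(4)
      connected_in_between[OF assms(1,2) connected_in_sym[OF assms(6)], of x]
    by (cases "v \<le> x") auto
  then show False
    using assms(3,5,6) connected_in_sym connected_in_trans by blast
qed

text \<open>The two conditions make every component an interval of \<open>[n]\<^sub>0\<close>, so distinct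
  components are ordered.\<close>
lemma priority_forestI:
  assumes "E \<subseteq> {0..n} \<times> {0..n}" "increasing_edges E" "spans_connected E"
    and "\<And>p p' c. (p, c) \<in> E \<Longrightarrow> (p', c) \<in> E \<Longrightarrow> p = p'"
  shows "priority_forest n E"
  unfolding priority_forest_def
proof (intro conjI ballI impI allI)
  fix u v assume nc: "\<not> connected_in E u v"
  then have "u < v \<or> v < u"
    using connected_in_refl by (metis linorder_neqE_nat)
  then show "(\<forall>x y. connected_in E u x \<and> connected_in E v y \<longrightarrow> x < y) \<or>
        (\<forall>x y. connected_in E u x \<and> connected_in E v y \<longrightarrow> y < x)"
    using separated_components[OF assms(2,3) nc]
      separated_components[OF assms(2,3)] nc connected_in_sym by blast
qed (use assms in \<open>auto simp: increasing_edges_def\<close>)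

section \<open>Maximal chains added edge by edge\<close>

definition larger_end :: "nat \<times> nat \<Rightarrow> nat" where
  "larger_end d = max (fst d) (snd d)"

lemma plabel_eq: "Q' - Q = {d} \<Longrightarrow> plabel Q Q' = larger_end d"
  unfolding plabel_def larger_end_def by simp

lemma image_prefix_diff:
  fixes m k :: nat
  assumes "inj_on e {1..m}" "k \<in> {1..m}"
  shows "e ` {1..k} - e ` {1..k - 1} = {e k}"
proof -
  have "{1..k - 1} \<subseteq> {1..m}" "k \<notin> {1..k - 1}" using assms(2) by auto
  then have "e k \<notin> e ` {1..k - 1}"
    using inj_on_image_mem_iff[OF assms] by blast
  moreover have "{1..k} = insert k {1..k - 1}"
    using assms(2) by auto
  ultimately show ?thesis by (simp add: insert_Diff_if)
qed

lemma max_chain_prefixes: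
  fixes e :: "nat \<Rightarrow> nat \<times> nat"
  assumes inj: "inj_on e {1..m}" and P: "P = e ` {1..m}"
    and pf: "\<And>k. k \<le> m \<Longrightarrow> priority_forest n (e ` {1..k})"
  shows "max_chain n P (\<lambda>k. e ` {1..k})"
proof -
  have "card P = m" using P inj by (simp add: card_image)
  then show ?thesis
    unfolding max_chain_def pcover_def
  proof (intro conjI ballI)
    fix i assume i: "i \<in> {1..card P}"
    with \<open>card P = m\<close> have "i \<le> m" by simp
    then show "priority_forest n (e ` {1..i - 1})" "priority_forest n (e ` {1..i})"
      using pf by auto
    show "card (e ` {1..i} - e ` {1..i - 1}) = 1"
      using i \<open>card P = m\<close> image_prefix_diff[OF inj] by simp
  qed (use P in auto)
qed

lemma jh_perm_prefixes:
  fixes e :: "nat \<Rightarrow> nat \<times> nat"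
  assumes "inj_on e {1..m}" "i \<in> {1..m}"
  shows "jh_perm (\<lambda>k. e ` {1..k}) i = larger_end (e i)"
  unfolding jh_perm_def using plabel_eq[OF image_prefix_diff[OF assms]] .

lemma max_chain_cover:
  "max_chain n P ch \<Longrightarrow> k < card P \<Longrightarrow> pcover n (ch k) (ch (Suc k))"
  unfolding max_chain_def by (metis Suc_leI atLeastAtMost_iff diff_Suc_1 le_add1 plus_1_eq_Suc)

lemma max_chain_subset:
  assumes "max_chain n P ch" "k \<le> card P"
  shows "ch k \<subseteq> P"
  using assms(2)
proof (induction k rule: inc_induct)
  case base
  then show ?case using assms(1) by (simp add: max_chain_def)
next
  case (step k)
  then show ?case
    using max_chain_cover[OF assms(1), of k] by (auto simp: pcover_def)
qed

lemma max_chain_eq_prefixes: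
  fixes e :: "nat \<Rightarrow> nat \<times> nat"
  assumes ch: "max_chain n P ch" and P: "P = e ` {1..m}"
    and inj: "inj_on (larger_end \<circ> e) {1..m}"
    and jh: "\<forall>i\<in>{1..m}. jh_perm ch i = larger_end (e i)"
  shows "k \<le> m \<Longrightarrow> ch k = e ` {1..k}"
proof (induction k)
  case 0
  then show ?case using ch by (simp add: max_chain_def)
next
  case (Suc k)
  have card_P: "card P = m"
    using P inj_on_imageI2[OF inj] by (simp add: card_image)
  with Suc.prems have "pcover n (ch k) (ch (Suc k))"
    using max_chain_cover[OF ch] by simp
  then obtain d where d: "ch (Suc k) - ch k = {d}" and sub: "ch k \<subseteq> ch (Suc k)"
    unfolding pcover_def by (metis card_1_singletonE)
  have "d \<in> P"
    using d max_chain_subset[OF ch, of "Suc k"] Suc.prems card_P by auto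
  then obtain j where j: "j \<in> {1..m}" and dj: "d = e j"
    using P by blast
  have "jh_perm ch (Suc k) = larger_end (e (Suc k))"
    using jh Suc.prems by simp
  then have "larger_end (e j) = larger_end (e (Suc k))"
    using plabel_eq[OF d] dj by (simp add: jh_perm_def)
  then have "j = Suc k"
    using inj_onD[OF inj, of j "Suc k"] j Suc.prems by simp
  then have "ch (Suc k) = insert (e (Suc k)) (ch k)"
    using d dj sub by auto
  also have "\<dots> = e ` {1..Suc k}"
    using Suc by (simp add: atLeastAtMostSuc_conv)
  finally show ?case .
qed

section \<open>Priority search\<close>

lemma length_psearch [simp]: "length (psearch m par k) = Suc k"
  by (induction k) auto

lemma take_psearch: "k \<le> k' \<Longrightarrow> take (Suc k) (psearch m par k') = psearch m par k"
  by (induction k') (auto simp: le_Suc_eq)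

lemma trancl_parent_rel_closed:
  assumes "(x, y) \<in> (parent_rel m par)\<^sup>+" "y \<in> S"
    and "\<And>a. a \<in> {1..m} \<Longrightarrow> par a \<in> S \<Longrightarrow> Inr a \<in> S"
  shows "x \<in> S"
  using assms(1,2) by induction (use assms(3) in \<open>auto simp: parent_rel_def\<close>)

locale forest_search =
  fixes m n :: nat and par :: "nat \<Rightarrow> nat + nat"
  assumes ordered: "ordered_forest m n par"
begin

definition nodes :: "(nat + nat) set" where
  "nodes = Inl ` {0..n - m} \<union> Inr ` {1..m}"

lemma card_nodes: "card nodes = Suc n"
proof -
  have "card nodes = card (Inl ` {0..n - m} :: (nat + nat) set) + card (Inr ` {1..m} :: (nat + nat) set)"
    unfolding nodes_def by (rule card_Un_disjoint) auto
  then show ?thesis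
    using ordered by (simp add: card_image ordered_forest_def)
qed

lemma Inr_in_nodes [simp]: "a \<in> {1..m} \<Longrightarrow> Inr a \<in> nodes"
  by (simp add: nodes_def)

lemma par_in_nodes:
  assumes "a \<in> {1..m}" shows "par a \<in> nodes"
proof -
  have "case par a of Inl j \<Rightarrow> j \<le> n - m | Inr b \<Rightarrow> b \<in> {1..m}"
    using ordered assms unfolding ordered_forest_def by blast
  then show ?thesis
    by (cases "par a") (auto simp: nodes_def)
qed

lemma exhausted_search_covers_nodes:
  assumes roots: "\<And>j. j \<le> n - m \<Longrightarrow> Inl j \<in> set vs" and "avail m par vs = {}"
  shows "nodes \<subseteq> set vs"
proof -
  have closed: "\<And>a. a \<in> {1..m} \<Longrightarrow> par a \<in> set vs \<Longrightarrow> Inr a \<in> set vs"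
    using assms(2) by (auto simp: avail_def)
  have "Inr a \<in> set vs" if a: "a \<in> {1..m}" for a
  proof -
    obtain j where j: "(Inr a, Inl j) \<in> (parent_rel m par)\<^sup>+"
      using ordered a unfolding ordered_forest_def by blast
    then obtain a' where "a' \<in> {1..m}" "par a' = Inl j"
      by (auto dest: tranclD2 simp: parent_rel_def)
    then have "j \<le> n - m"
      using par_in_nodes[of a'] by (auto simp: nodes_def)
    then show ?thesis
      using trancl_parent_rel_closed[OF j roots closed] by blast
  qed
  then show ?thesis
    using roots by (auto simp: nodes_def)
qed

text \<open>The roots visited so far are always the first ones; by
  \<open>exhausted_search_covers_nodes\<close> the next root exists as long as fewer than \<open>n + 1\<close> nodes
  have been visited.\<close>
lemma psearch_invariant:
  "k \<le> n \<Longrightarrow> distinct (psearch m par k) \<and> set (psearch m par k) \<subseteq> nodes \<and>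
     {j. Inl j \<in> set (psearch m par k)} = {..<length (filter isl (psearch m par k))}"
proof (induction k)
  case 0
  then show ?case by (auto simp: nodes_def)
next
  case (Suc k)
  let ?S = "psearch m par k"
  let ?c = "length (filter isl ?S)"
  from Suc have IH: "distinct ?S" "set ?S \<subseteq> nodes" "{j. Inl j \<in> set ?S} = {..<?c}"
    by auto
  show ?case
  proof (cases "avail m par ?S = {}")
    case False
    define b where "b = Min (avail m par ?S)"
    have "finite (avail m par ?S)"
      by (simp add: avail_def)
    then have "b \<in> avail m par ?S"
      using False by (simp add: b_def Min_in)
    then have "b \<in> {1..m}" "Inr b \<notin> set ?S"
      by (simp_all add: avail_def)
    moreover have "next_visit m par ?S = Inr b"
      using False by (simp add: next_visit_def b_def)
    moreover have "{j. Inl j \<in> set (?S @ [Inr b])} = {j. Inl j \<in> set ?S}"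
      by auto
    ultimately show ?thesis
      using IH by (simp add: nodes_def)
  next
    case True
    have "?c \<le> n - m"
    proof (rule ccontr)
      assume "\<not> ?c \<le> n - m"
      then have "Inl j \<in> set ?S" if "j \<le> n - m" for j
        using that IH(3) by (metis lessThan_iff mem_Collect_eq order.strict_trans2 not_le)
      then have "nodes \<subseteq> set ?S"
        using True by (rule exhausted_search_covers_nodes)
      then have "card nodes \<le> card (set ?S)"
        by (simp add: card_mono)
      then have "Suc n \<le> Suc k"
        using card_nodes distinct_card[OF IH(1)] by simp
      with Suc.prems show False by simp
    qed
    moreover have "Inl ?c \<notin> set ?S"
      using IH(3) by auto
    moreover have "next_visit m par ?S = Inl ?c"
      using True by (simp add: next_visit_def)
    moreover have "{j. Inl j \<in> set (?S @ [Inl ?c])} = insert ?c {j. Inl j \<in> set ?S}"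
      by auto
    ultimately show ?thesis
      using IH by (simp add: nodes_def lessThan_Suc)
  qed
qed

abbreviation visits :: "(nat + nat) list" where
  "visits \<equiv> psearch m par n"

abbreviation step :: "nat + nat \<Rightarrow> nat" where
  "step \<equiv> step_of m n par"

lemma distinct_visits: "distinct visits"
  using psearch_invariant[of n] by simp

lemma set_visits: "set visits = nodes"
proof (rule card_subset_eq)
  show "set visits \<subseteq> nodes"
    using psearch_invariant[of n] by simp
  show "card (set visits) = card nodes"
    using distinct_card[OF distinct_visits] card_nodes by simp
qed (simp add: nodes_def)

lemma nth_visits: "i \<le> n \<Longrightarrow> visits ! i = psearch m par i ! i"
  by (metis take_psearch lessI nth_take)

lemma visits_0: "visits ! 0 = Inl 0"
  by (simp add: nth_visits)

lemma visits_Suc: "i < n \<Longrightarrow> visits ! Suc i = next_visit m par (psearch m par i)"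
  by (simp add: nth_visits nth_append)

lemma step_nth_visits: "t \<le> n \<Longrightarrow> step (visits ! t) = t"
  unfolding step_of_def visit_def
  by (rule the_equality) (use distinct_visits nth_eq_iff_index_eq in fastforce)+

lemma step_le: "x \<in> nodes \<Longrightarrow> step x \<le> n"
  and nth_visits_step: "x \<in> nodes \<Longrightarrow> visits ! step x = x"
  by (metis in_set_conv_nth set_visits length_psearch less_Suc_eq_le step_nth_visits)+

lemma inj_on_step: "inj_on step nodes"
  by (metis inj_onI nth_visits_step)

lemma mem_psearch_iff:
  assumes "x \<in> nodes" "i \<le> n"
  shows "x \<in> set (psearch m par i) \<longleftrightarrow> step x \<le> i"
proof -
  have "x \<in> set (take (Suc i) visits) \<longleftrightarrow> step x < Suc i"
    using assms step_le[OF assms(1)] nth_visits_step[OF assms(1)] distinct_visits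
    by (auto simp: in_set_conv_nth step_nth_visits)
  then show ?thesis
    using take_psearch[OF assms(2)] by (simp add: less_Suc_eq_le)
qed

lemma avail_psearch_iff:
  assumes "a \<in> {1..m}" "i \<le> n"
  shows "a \<in> avail m par (psearch m par i) \<longleftrightarrow> step (par a) \<le> i \<and> i < step (Inr a)"
  using mem_psearch_iff[OF par_in_nodes[OF assms(1)] assms(2)]
    mem_psearch_iff[of "Inr a" i] assms
  by (auto simp: avail_def nodes_def)

lemma visit_unblocked:
  assumes "i < n" "a \<in> avail m par (psearch m par i)"
  obtains b where "visits ! Suc i = Inr b" "b \<in> avail m par (psearch m par i)" "b \<le> a"
proof
  let ?A = "avail m par (psearch m par i)"
  have "finite ?A"
    by (simp add: avail_def)
  with assms(2) show "Min ?A \<in> ?A" "Min ?A \<le> a"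
    by (auto intro: Min_in Min_le)
  show "visits ! Suc i = Inr (Min ?A)"
    using assms by (auto simp: visits_Suc next_visit_def)
qed

lemma visited_label_unblocked:
  assumes "i < n" "visits ! Suc i = Inr a"
  shows "a \<in> avail m par (psearch m par i)"
proof -
  let ?A = "avail m par (psearch m par i)"
  have "next_visit m par (psearch m par i) = Inr a"
    using assms by (simp add: visits_Suc)
  then have "?A \<noteq> {}" "a = Min ?A"
    by (auto simp: next_visit_def split: if_splits)
  moreover have "finite ?A"
    by (simp add: avail_def)
  ultimately show ?thesis
    by (simp add: Min_in)
qed

lemma step_par_less:
  assumes a: "a \<in> {1..m}"
  shows "step (par a) < step (Inr a)"
proof -
  have s: "step (Inr a) \<le> n" "visits ! step (Inr a) = Inr a"
    using a step_le nth_visits_step by simp_all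
  then obtain i where i: "step (Inr a) = Suc i"
    using visits_0 by (cases "step (Inr a)") auto
  with s have "a \<in> avail m par (psearch m par i)"
    by (intro visited_label_unblocked) auto
  then show ?thesis
    using avail_psearch_iff[OF a, of i] s i by simp
qed

lemma ptrav_inv_eq_step:
  assumes a: "a \<in> {1..m}"
  shows "ptrav_inv m n par a = step (Inr a)"
  unfolding ptrav_inv_def
proof (rule the_equality)
  have s: "step (Inr a) \<le> n" "visits ! step (Inr a) = Inr a"
    using a step_le nth_visits_step by simp_all
  moreover have "step (Inr a) \<noteq> 0"
    using s visits_0 by (metis sum.disc(2) sum.disc(1))
  ultimately show "step (Inr a) \<in> {1..n} \<and> ptrav m n par (step (Inr a)) = Some a"
    by (simp add: ptrav_def visit_def)
  fix i assume "i \<in> {1..n} \<and> ptrav m n par i = Some a"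
  then show "i = step (Inr a)"
    using step_nth_visits by (force simp: ptrav_def visit_def split: sum.splits)
qed

definition pedge :: "nat \<Rightarrow> nat \<times> nat" where
  "pedge a = (step (par a), step (Inr a))"

lemma pforest_of_eq: "pforest_of m n par = pedge ` {1..m}"
  unfolding pforest_of_def pedge_def by auto

lemma larger_end_pedge: "a \<in> {1..m} \<Longrightarrow> larger_end (pedge a) = step (Inr a)"
  using step_par_less by (simp add: larger_end_def pedge_def)

lemma step_Inr_eqD: "a \<in> {1..m} \<Longrightarrow> b \<in> {1..m} \<Longrightarrow> step (Inr a) = step (Inr b) \<Longrightarrow> a = b"
  using inj_onD[OF inj_on_step, of "Inr a" "Inr b"] by (simp add: nodes_def)

lemma inj_on_larger_end_pedge: "inj_on (larger_end \<circ> pedge) {1..m}"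
proof (rule inj_onI)
  fix a b assume "a \<in> {1..m}" "b \<in> {1..m}" "(larger_end \<circ> pedge) a = (larger_end \<circ> pedge) b"
  then have "step (Inr a) = step (Inr b)"
    by (simp add: larger_end_pedge)
  with \<open>a \<in> {1..m}\<close> \<open>b \<in> {1..m}\<close> show "a = b"
    by (rule step_Inr_eqD)
qed

lemma ptrav_inv_eq_larger_end: "a \<in> {1..m} \<Longrightarrow> ptrav_inv m n par a = larger_end (pedge a)"
  by (simp add: ptrav_inv_eq_step larger_end_pedge)

text \<open>Induction on \<open>w\<close>: the node \<open>b\<close> visited at step \<open>w\<close> has a label \<open>b < j\<close>, since \<open>j\<close>
  is unblocked at that time, and the edge of \<open>b\<close> joins \<open>w\<close> to an earlier step.\<close>
lemma pedge_prefix_spans: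
  assumes k: "k \<le> m"
  shows "j \<in> {1..k} \<Longrightarrow> step (par j) < w \<Longrightarrow> w < step (Inr j) \<Longrightarrow>
    connected_in (pedge ` {1..k}) (step (par j)) w"
proof (induction w arbitrary: j rule: less_induct)
  case (less w)
  let ?E = "pedge ` {1..k}"
  have j: "j \<in> {1..m}"
    using less.prems(1) k by auto
  then have "step (Inr j) \<le> n"
    by (simp add: step_le)
  obtain i where w: "w = Suc i"
    using less.prems(2) by (cases w) auto
  with less.prems \<open>step (Inr j) \<le> n\<close> have "i < n" "j \<in> avail m par (psearch m par i)"
    using avail_psearch_iff[OF j, of i] by auto
  then obtain b where "visits ! w = Inr b" and bA: "b \<in> avail m par (psearch m par i)" and "b \<le> j"
    using visit_unblocked w by blast
  then have b: "b \<in> {1..m}" and step_b: "step (Inr b) = w"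
    using step_nth_visits[of w] w \<open>i < n\<close> by (auto simp: avail_def)
  with less.prems(3) \<open>b \<le> j\<close> less.prems(1) have bk: "b \<in> {1..k}"
    by (cases "b = j") auto
  let ?q = "step (par b)"
  have "?q < w"
    using avail_psearch_iff[OF b, of i] bA w \<open>i < n\<close> by simp
  have qw: "connected_in ?E ?q w"
    using connected_in_edge[of ?q w ?E] bk step_b by (force simp: pedge_def)
  consider "?q = step (par j)" | "step (par j) < ?q" | "?q < step (par j)"
    by linarith
  then show ?case
  proof cases
    case 1
    with qw show ?thesis by simp
  next
    case 2
    then have "connected_in ?E (step (par j)) ?q"
      using less.IH[OF \<open>?q < w\<close> less.prems(1)] less.prems(3) \<open>?q < w\<close> by simp
    then show ?thesis
      using qw by (rule connected_in_trans)
  next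
    case 3
    then have "connected_in ?E ?q (step (par j))"
      using less.IH[OF less.prems(2) bk] less.prems(2) step_b by simp
    with qw show ?thesis
      using connected_in_sym connected_in_trans by blast
  qed
qed

lemma priority_forest_pedge_prefix:
  assumes k: "k \<le> m"
  shows "priority_forest n (pedge ` {1..k})"
proof (rule priority_forestI)
  show "pedge ` {1..k} \<subseteq> {0..n} \<times> {0..n}"
  proof (rule image_subsetI)
    fix a assume "a \<in> {1..k}"
    with k have a: "a \<in> {1..m}"
      by simp
    then show "pedge a \<in> {0..n} \<times> {0..n}"
      by (simp add: pedge_def step_le par_in_nodes)
  qed
  show "increasing_edges (pedge ` {1..k})"
    using k step_par_less by (auto simp: increasing_edges_def pedge_def)
  show "spans_connected (pedge ` {1..k})"
    using pedge_prefix_spans[OF k] by (auto simp: spans_connected_def pedge_def)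
  fix p p' c assume "(p, c) \<in> pedge ` {1..k}" "(p', c) \<in> pedge ` {1..k}"
  then obtain a a' where a: "a \<in> {1..k}" "a' \<in> {1..k}" "pedge a = (p, c)" "pedge a' = (p', c)"
    by (metis imageE)
  with k have "a \<in> {1..m}" "a' \<in> {1..m}" "step (Inr a) = step (Inr a')"
    by (auto simp: pedge_def)
  then have "a = a'"
    by (rule step_Inr_eqD)
  with a(3,4) show "p = p'" by simp
qed

end

theorem lemma3p3:
  fixes m n :: nat and par :: "nat \<Rightarrow> nat + nat"
  assumes "ordered_forest m n par"
  shows "(\<exists>ch. max_chain n (pforest_of m n par) ch \<and>
            (\<forall>i\<in>{1..m}. jh_perm ch i = ptrav_inv m n par i)) \<and>
         (\<forall>ch ch'. max_chain n (pforest_of m n par) ch \<and>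
            (\<forall>i\<in>{1..m}. jh_perm ch i = ptrav_inv m n par i) \<and>
            max_chain n (pforest_of m n par) ch' \<and>
            (\<forall>i\<in>{1..m}. jh_perm ch' i = ptrav_inv m n par i) \<longrightarrow>
            (\<forall>i\<le>m. ch i = ch' i))"
proof -
  interpret forest_search m n par
    by standard (rule assms)
  let ?P = "pforest_of m n par"
  have inj: "inj_on pedge {1..m}"
    using inj_on_larger_end_pedge by (rule inj_on_imageI2)
  have "max_chain n ?P (\<lambda>k. pedge ` {1..k})"
    using inj pforest_of_eq priority_forest_pedge_prefix by (rule max_chain_prefixes)
  moreover have "\<forall>i\<in>{1..m}. jh_perm (\<lambda>k. pedge ` {1..k}) i = ptrav_inv m n par i"
    using jh_perm_prefixes[OF inj] ptrav_inv_eq_larger_end by simp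
  moreover have unique: "ch i = pedge ` {1..i}"
    if "max_chain n ?P ch" "\<forall>i\<in>{1..m}. jh_perm ch i = ptrav_inv m n par i" "i \<le> m" for ch i
  proof -
    have "\<forall>i\<in>{1..m}. jh_perm ch i = larger_end (pedge i)"
      using that(2) ptrav_inv_eq_larger_end by simp
    with that(1,3) show ?thesis
      using max_chain_eq_prefixes[OF _ pforest_of_eq inj_on_larger_end_pedge] by blast
  qed
  ultimately show ?thesis
    by (metis (no_types, lifting) unique)
qed

end
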